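(* Let $(R,\mathfrak{m})$ be a commutative Artinian local ring with identity, $\mathfrak{m}\neq0$ and $\mathfrak{m}^2=0$, and let $q\in R[x]$ be an irreducible GE polynomial. For every integer $n\ge2$: if $n$ is even then $\{2,4,6,\dots,n-2,n\}\subseteq L(q^n)$; if $n$ is odd then $\{3,5,7,\dots,n-2,n\}\subseteq L(q^n)$.
   Context: A generalized Eisenstein (GE) polynomial is a nonconstant monic polynomial $x^d+f_{d-1}x^{d-1}+\dots+f_0\in R[x]$ with $f_i\in\mathfrak{m}$ for all $i<d$. A nonunit polynomial is irreducible if in any factorization into two polynomials one factor is a unit of $R[x]$. A positive integer $k$ is a length of $f$ if $f$ is a product of $k$ irreducible polynomials; $L(f)$ denotes the set of lengths of $f$. *)

theory Defs
  imports "HOL-Computational_Algebra.Polynomial" "HOL-Computational_Algebra.Factorial_Ring"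
begin

definition ring_ideal :: "'a::comm_ring_1 set \<Rightarrow> bool" where
  "ring_ideal I \<longleftrightarrow> 0 \<in> I \<and> (\<forall>a\<in>I. \<forall>b\<in>I. a + b \<in> I) \<and> (\<forall>r. \<forall>a\<in>I. r * a \<in> I)"

definition maximal_ideal :: "'a::comm_ring_1 set \<Rightarrow> bool" where
  "maximal_ideal M \<longleftrightarrow> ring_ideal M \<and> M \<noteq> UNIV \<and>
     (\<forall>J. ring_ideal J \<and> M \<subseteq> J \<longrightarrow> J = M \<or> J = UNIV)"

definition local_ring_with :: "'a::comm_ring_1 set \<Rightarrow> bool" where
  "local_ring_with m \<longleftrightarrow> maximal_ideal m \<and> (\<forall>J. maximal_ideal J \<longrightarrow> J = m)"

definition artinian :: "'a::comm_ring_1 itself \<Rightarrow> bool" where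
  "artinian _ \<longleftrightarrow> (\<forall>I :: nat \<Rightarrow> 'a set. (\<forall>n. ring_ideal (I n)) \<and> (\<forall>n. I (Suc n) \<subseteq> I n)
       \<longrightarrow> (\<exists>N. \<forall>n\<ge>N. I n = I N))"

definition GE_poly :: "'a::comm_ring_1 set \<Rightarrow> 'a poly \<Rightarrow> bool" where
  "GE_poly m f \<longleftrightarrow> degree f > 0 \<and> lead_coeff f = 1 \<and> (\<forall>i < degree f. coeff f i \<in> m)"

definition lengths :: "'a::comm_ring_1 poly \<Rightarrow> nat set" where
  "lengths f = {k. k > 0 \<and> (\<exists>xs. length xs = k \<and> (\<forall>x\<in>set xs. irreducible x) \<and> prod_list xs = f)}"

end

theory Submission
  imports Defs
begin

text \<open>Fix \<open>0 \<noteq> a \<in> m\<close> and let \<open>d = deg q\<close>. For \<open>j \<ge> 2\<close> the polynomials \<open>q\<^sup>j \<plusminus> a\<close> are irreducible: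
  modulo \<open>m\<close> they reduce to the monomial \<open>x\<^sup>d\<^sup>j\<close>, so in any factorization both factors reduce to
  monomials; their constant terms cannot both lie in \<open>m\<close>, because \<open>m\<^sup>2 = 0\<close> while the constant term
  of \<open>q\<^sup>j \<plusminus> a\<close> is \<open>\<plusminus>a \<noteq> 0\<close>, so one factor reduces to a nonzero constant and is a unit.
  Since \<open>a\<^sup>2 = 0\<close>, \<open>(q\<^sup>j + a)(q\<^sup>j - a) = q\<^sup>2\<^sup>j\<close>, and \<open>q\<^sup>n = (q\<^sup>j + a)(q\<^sup>j - a) q\<^sup>k\<^sup>-\<^sup>2\<close> with
  \<open>2j + k - 2 = n\<close> is a factorization of length \<open>k\<close> for every \<open>2 \<le> k < n\<close> with \<open>k \<equiv> n (mod 2)\<close>.\<close>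

lemma ring_ideal_0: "ring_ideal I \<Longrightarrow> 0 \<in> I"
  unfolding ring_ideal_def by blast

lemma ring_ideal_add: "ring_ideal I \<Longrightarrow> a \<in> I \<Longrightarrow> b \<in> I \<Longrightarrow> a + b \<in> I"
  unfolding ring_ideal_def by blast

lemma ring_ideal_mult_left: "ring_ideal I \<Longrightarrow> a \<in> I \<Longrightarrow> r * a \<in> I"
  unfolding ring_ideal_def by blast

lemma ring_ideal_mult_right: "ring_ideal I \<Longrightarrow> a \<in> I \<Longrightarrow> a * r \<in> I"
  using ring_ideal_mult_left[of I a r] by (simp add: mult.commute)

lemma ring_ideal_uminus: "ring_ideal I \<Longrightarrow> a \<in> I \<Longrightarrow> - a \<in> I"
  using ring_ideal_mult_left[of I a "-1"] by simp

lemma ring_ideal_diff: "ring_ideal I \<Longrightarrow> a \<in> I \<Longrightarrow> b \<in> I \<Longrightarrow> a - b \<in> I"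
  using ring_ideal_add[of I a "- b"] ring_ideal_uminus[of I b] by simp

lemma ring_ideal_sum: "ring_ideal I \<Longrightarrow> (\<And>i. i \<in> A \<Longrightarrow> f i \<in> I) \<Longrightarrow> sum f A \<in> I"
  by (induction A rule: infinite_finite_induct) (auto intro: ring_ideal_0 ring_ideal_add)

lemma ring_ideal_add_principal:
  assumes "ring_ideal I"
  shows "ring_ideal {x + r * s | x s. x \<in> I}"
  unfolding ring_ideal_def
proof (intro conjI ballI allI)
  have "(0::'a) = 0 + r * 0" by simp
  then show "0 \<in> {x + r * s | x s. x \<in> I}"
    using ring_ideal_0[OF assms] by blast
next
  fix a b assume "a \<in> {x + r * s | x s. x \<in> I}" "b \<in> {x + r * s | x s. x \<in> I}"
  then obtain x s y t where "a = x + r * s" "b = y + r * t" "x \<in> I" "y \<in> I" by blast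
  then have "a + b = (x + y) + r * (s + t)" "x + y \<in> I"
    using ring_ideal_add[OF assms] by (auto simp: algebra_simps)
  then show "a + b \<in> {x + r * s | x s. x \<in> I}" by blast
next
  fix c a assume "a \<in> {x + r * s | x s. x \<in> I}"
  then obtain x s where "a = x + r * s" "x \<in> I" by blast
  moreover have "c * x \<in> I"
    using ring_ideal_mult_left[OF assms \<open>x \<in> I\<close>] .
  ultimately have "c * a = c * x + r * (c * s)" "c * x \<in> I"
    by (simp_all add: algebra_simps)
  then show "c * a \<in> {x + r * s | x s. x \<in> I}" by blast
qed

lemma one_not_in_maximal_ideal: "maximal_ideal M \<Longrightarrow> 1 \<notin> M"
  unfolding maximal_ideal_def ring_ideal_def by (metis UNIV_eq_I mult.right_neutral)

lemma square_zero_const_factorization: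
  fixes p :: "'a::comm_ring_1 poly"
  assumes "a * a = 0"
  shows "(p + [:a:]) * (p + [:- a:]) = p\<^sup>2"
proof -
  have "[:a:] * [:- a:] = 0" using assms by simp
  then show ?thesis by (simp add: algebra_simps power2_eq_square)
qed

lemma length_in_lengths:
  "xs \<noteq> [] \<Longrightarrow> \<forall>x\<in>set xs. irreducible x \<Longrightarrow> length xs \<in> lengths (prod_list xs)"
  unfolding lengths_def by auto

locale square_zero_maximal_ideal =
  fixes m :: "'a::comm_ring_1 set"
  assumes maximal: "maximal_ideal m"
    and square_zero: "\<And>a b. a \<in> m \<Longrightarrow> b \<in> m \<Longrightarrow> a * b = 0"
begin

lemma ideal: "ring_ideal m"
  using maximal unfolding maximal_ideal_def by blast

lemmas zero_in [simp] = ring_ideal_0[OF ideal]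
  and add_in = ring_ideal_add[OF ideal]
  and mult_left_in = ring_ideal_mult_left[OF ideal]
  and mult_right_in = ring_ideal_mult_right[OF ideal]
  and uminus_in = ring_ideal_uminus[OF ideal]
  and diff_in = ring_ideal_diff[OF ideal]
  and sum_in = ring_ideal_sum[OF ideal]

lemma one_not_in [simp]: "1 \<notin> m"
  using one_not_in_maximal_ideal[OF maximal] .

text \<open>Maximality gives \<open>1 = x + r s\<close> with \<open>x \<in> m\<close>, and \<open>1 - x\<close> is a unit with inverse \<open>1 + x\<close>.\<close>
lemma unit_if_not_in:
  assumes "r \<notin> m"
  shows "r dvd 1"
proof -
  let ?J = "{x + r * s | x s. x \<in> m}"
  have "y \<in> ?J" if "y \<in> m" for y
  proof -
    have "y = y + r * 0" by simp
    with that show ?thesis by blast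
  qed
  then have "m \<subseteq> ?J" by blast
  moreover have "r \<in> ?J"
    by (force intro: exI[of _ 0] exI[of _ 1])
  ultimately have "?J = UNIV"
    using maximal assms ring_ideal_add_principal[OF ideal] unfolding maximal_ideal_def by blast
  then obtain x s where x: "x \<in> m" and "1 = x + r * s" by blast
  then have "r * s = 1 - x" by (simp add: algebra_simps)
  then have "r * (s * (1 + x)) = (1 - x) * (1 + x)"
    by (simp add: mult.assoc[symmetric])
  also have "\<dots> = 1"
    using square_zero[OF x x] by (simp add: algebra_simps)
  finally show ?thesis by (metis dvdI)
qed

lemma mult_not_in:
  assumes "x \<notin> m" "y \<notin> m"
  shows "x * y \<notin> m"
proof
  assume "x * y \<in> m"
  obtain c where "1 = x * c" using unit_if_not_in[OF assms(1)] by (auto elim: dvdE)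
  then have "y = c * (x * y)" by (metis mult.assoc mult.commute mult_1)
  with mult_left_in[OF \<open>x * y \<in> m\<close>, of c] assms(2) show False by simp
qed

lemma coeff_mult_in:
  assumes "\<And>k. k \<le> n \<Longrightarrow> coeff g k \<in> m \<or> coeff h (n - k) \<in> m"
  shows "coeff (g * h) n \<in> m"
  unfolding coeff_mult by (rule sum_in) (use assms mult_left_in mult_right_in in blast)

lemma coeff_mult_not_in:
  assumes "i \<le> n" "coeff g i \<notin> m" "coeff h (n - i) \<notin> m"
    and "\<And>k. k \<le> n \<Longrightarrow> k \<noteq> i \<Longrightarrow> coeff g k \<in> m \<or> coeff h (n - k) \<in> m"
  shows "coeff (g * h) n \<notin> m"
proof
  assume "coeff (g * h) n \<in> m"
  moreover have "(\<Sum>k\<in>{..n} - {i}. coeff g k * coeff h (n - k)) \<in> m"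
    by (rule sum_in) (use assms(4) mult_left_in mult_right_in in blast)
  moreover have "coeff (g * h) n
      = coeff g i * coeff h (n - i) + (\<Sum>k\<in>{..n} - {i}. coeff g k * coeff h (n - k))"
    unfolding coeff_mult using assms(1) sum.remove[of "{..n}" i] by simp
  ultimately have "coeff g i * coeff h (n - i) \<in> m"
    using diff_in by fastforce
  with mult_not_in assms(2,3) show False by blast
qed

lemma coeff_mult_in_if_coeffs_in: "(\<And>k. coeff g k \<in> m) \<Longrightarrow> coeff (g * h) n \<in> m"
  by (rule coeff_mult_in) blast

text \<open>The image of \<open>p\<close> in \<open>(R/m)[x]\<close> has its lowest term, its highest term, or its only
  term in degree \<open>i\<close>, respectively.\<close>

definition reduced_order :: "'a poly \<Rightarrow> nat \<Rightarrow> bool" where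
  "reduced_order p i \<longleftrightarrow> coeff p i \<notin> m \<and> (\<forall>k<i. coeff p k \<in> m)"

definition reduced_degree :: "'a poly \<Rightarrow> nat \<Rightarrow> bool" where
  "reduced_degree p i \<longleftrightarrow> coeff p i \<notin> m \<and> (\<forall>k>i. coeff p k \<in> m)"

definition reduced_monomial :: "'a poly \<Rightarrow> nat \<Rightarrow> bool" where
  "reduced_monomial p i \<longleftrightarrow> coeff p i \<notin> m \<and> (\<forall>k. k \<noteq> i \<longrightarrow> coeff p k \<in> m)"

lemma reduced_monomial_iff: "reduced_monomial p i \<longleftrightarrow> reduced_order p i \<and> reduced_degree p i"
  unfolding reduced_monomial_def reduced_order_def reduced_degree_def by (auto simp: nat_neq_iff)

lemma reduced_order_unique: "reduced_order p i \<Longrightarrow> reduced_order p j \<Longrightarrow> i = j"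
  unfolding reduced_order_def by (meson linorder_neqE_nat)

lemma reduced_degree_unique: "reduced_degree p i \<Longrightarrow> reduced_degree p j \<Longrightarrow> i = j"
  unfolding reduced_degree_def by (meson linorder_neqE_nat)

lemma reduced_monomial_unique: "reduced_monomial p i \<Longrightarrow> reduced_monomial p j \<Longrightarrow> i = j"
  unfolding reduced_monomial_iff using reduced_order_unique by blast

lemma reduced_order_le_reduced_degree: "reduced_order p i \<Longrightarrow> reduced_degree p j \<Longrightarrow> i \<le> j"
  unfolding reduced_order_def reduced_degree_def by (meson not_le)

lemma reduced_order_exists:
  assumes "coeff p k \<notin> m"
  shows "\<exists>i. reduced_order p i"
proof -
  let ?i = "LEAST i. coeff p i \<notin> m"
  have "coeff p ?i \<notin> m" using LeastI[of _ k] assms .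
  moreover have "\<forall>k<?i. coeff p k \<in> m" using not_less_Least by blast
  ultimately show ?thesis unfolding reduced_order_def by blast
qed

lemma reduced_degree_exists:
  assumes "coeff p k \<notin> m"
  shows "\<exists>i. reduced_degree p i"
proof -
  let ?S = "{i. coeff p i \<notin> m}"
  have "i \<le> degree p" if "coeff p i \<notin> m" for i
    using that coeff_eq_0[of p i] by (cases "i \<le> degree p") auto
  then have "?S \<subseteq> {..degree p}" by auto
  then have "finite ?S" by (rule finite_subset) simp
  moreover have "k \<in> ?S" using assms by simp
  ultimately have "Max ?S \<in> ?S" and "\<forall>k>Max ?S. coeff p k \<in> m"
    using Max_in Max_ge[of ?S] by (blast, meson mem_Collect_eq not_le)
  then show ?thesis unfolding reduced_degree_def by blast
qed

lemma reduced_order_mult: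
  assumes g: "reduced_order g i" and h: "reduced_order h j"
  shows "reduced_order (g * h) (i + j)"
proof -
  have outside: "coeff g k \<in> m \<or> coeff h (n - k) \<in> m" if "k < i \<or> n - k < j" for k n
    using g h that unfolding reduced_order_def by blast
  show ?thesis unfolding reduced_order_def
  proof (intro conjI allI impI)
    show "coeff (g * h) (i + j) \<notin> m"
      using g h unfolding reduced_order_def
      by (intro coeff_mult_not_in[of i] outside) (auto simp: nat_neq_iff)
    show "coeff (g * h) n \<in> m" if "n < i + j" for n
      using that by (intro coeff_mult_in outside) linarith
  qed
qed

lemma reduced_degree_mult:
  assumes g: "reduced_degree g i" and h: "reduced_degree h j"
  shows "reduced_degree (g * h) (i + j)"
proof -
  have outside: "coeff g k \<in> m \<or> coeff h (n - k) \<in> m" if "k > i \<or> n - k > j" for k n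
    using g h that unfolding reduced_degree_def by blast
  show ?thesis unfolding reduced_degree_def
  proof (intro conjI allI impI)
    show "coeff (g * h) (i + j) \<notin> m"
      using g h unfolding reduced_degree_def
      by (intro coeff_mult_not_in[of i] outside) (auto simp: nat_neq_iff)
    show "coeff (g * h) n \<in> m" if "n > i + j" for n
      using that by (intro coeff_mult_in outside) linarith
  qed
qed

lemma reduced_monomial_mult:
  "reduced_monomial g i \<Longrightarrow> reduced_monomial h j \<Longrightarrow> reduced_monomial (g * h) (i + j)"
  unfolding reduced_monomial_iff using reduced_order_mult reduced_degree_mult by blast

lemma reduced_monomial_1: "reduced_monomial 1 0"
  unfolding reduced_monomial_def by simp

lemma reduced_monomial_power: "reduced_monomial p d \<Longrightarrow> reduced_monomial (p ^ j) (d * j)"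
  by (induction j) (simp_all add: reduced_monomial_1 reduced_monomial_mult)

lemma square_zero_poly: "(\<And>k. coeff e k \<in> m) \<Longrightarrow> e * e = 0"
  by (rule poly_eqI) (simp add: coeff_mult square_zero)

text \<open>After scaling by the inverse of its constant term, \<open>a = 1 + e\<close> with \<open>e\<close> having
  coefficients in \<open>m\<close>, so \<open>e\<^sup>2 = 0\<close> and \<open>1 - e\<close> is an inverse.\<close>
lemma unit_if_reduced_degree_0:
  assumes a: "reduced_degree a 0"
  shows "a dvd 1"
proof -
  obtain c where c: "1 = coeff a 0 * c"
    using a unit_if_not_in unfolding reduced_degree_def by (blast elim: dvdE)
  define e where "e = smult c a - 1"
  have "coeff e k \<in> m" for k
  proof (cases k)
    case (Suc l)
    then show ?thesis
      using a mult_left_in[of "coeff a k" c] unfolding e_def reduced_degree_def by simp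
  qed (use c in \<open>simp add: e_def mult.commute\<close>)
  then have "(1 + e) * (1 - e) = 1"
    using square_zero_poly by (simp add: algebra_simps)
  then have "a * smult c (1 - e) = 1"
    by (simp add: e_def mult.commute)
  then show ?thesis by (metis dvdI)
qed

lemma reduced_monomial_factors:
  assumes f: "reduced_monomial (a * b) D"
  obtains i j where "reduced_monomial a i" "reduced_monomial b j" "i + j = D"
proof -
  have "\<exists>k. coeff a k \<notin> m"
    using f coeff_mult_in_if_coeffs_in unfolding reduced_monomial_def by blast
  then obtain i i' where i: "reduced_order a i" and i': "reduced_degree a i'"
    using reduced_order_exists reduced_degree_exists by blast
  have "\<exists>k. coeff b k \<notin> m"
    using f coeff_mult_in_if_coeffs_in[of b a] unfolding reduced_monomial_def
    by (metis mult.commute)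
  then obtain j j' where j: "reduced_order b j" and j': "reduced_degree b j'"
    using reduced_order_exists reduced_degree_exists by blast
  have sums: "i + j = D" "i' + j' = D"
    using f reduced_order_mult[OF i j] reduced_degree_mult[OF i' j']
      reduced_order_unique reduced_degree_unique unfolding reduced_monomial_iff by blast+
  have "i \<le> i'" "j \<le> j'"
    using reduced_order_le_reduced_degree i i' j j' by blast+
  with sums have "i' = i" "j' = j" by linarith+
  with that i i' j j' sums show ?thesis
    unfolding reduced_monomial_iff by blast
qed

lemma irreducible_if_reduced_monomial:
  assumes f: "reduced_monomial f D" and D: "D > 0" and f0: "coeff f 0 \<noteq> 0"
  shows "irreducible f"
proof (rule irreducibleI)
  show "f \<noteq> 0" using f0 by auto
  show "\<not> f dvd 1"
  proof
    assume "f dvd 1"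
    then obtain u where "reduced_monomial (f * u) 0"
      using reduced_monomial_1 by (metis dvdE)
    then obtain i j where "reduced_monomial f i" "i + j = 0"
      by (rule reduced_monomial_factors)
    with f D reduced_monomial_unique show False by fastforce
  qed
  fix a b assume ab: "f = a * b"
  then obtain i j where i: "reduced_monomial a i" and j: "reduced_monomial b j"
    using f reduced_monomial_factors by blast
  consider "i = 0" | "j = 0" | "coeff a 0 \<in> m" "coeff b 0 \<in> m"
    using i j unfolding reduced_monomial_def by (cases "i = 0"; cases "j = 0") auto
  then show "a dvd 1 \<or> b dvd 1"
  proof cases
    case 3
    then have "coeff f 0 = 0" using ab square_zero by (simp add: coeff_mult_0)
    with f0 show ?thesis by contradiction
  qed (use i j unit_if_reduced_degree_0 reduced_monomial_iff in blast)+
qed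

lemma reduced_monomial_if_GE_poly: "GE_poly m q \<Longrightarrow> reduced_monomial q (degree q)"
  unfolding GE_poly_def reduced_monomial_def by (auto simp: nat_neq_iff coeff_eq_0)

lemma reduced_monomial_add_const:
  "reduced_monomial p D \<Longrightarrow> D > 0 \<Longrightarrow> b \<in> m \<Longrightarrow> reduced_monomial (p + [:b:]) D"
  unfolding reduced_monomial_def by (auto simp: coeff_pCons add_in split: nat.split)

lemma coeff_0_power_eq_0:
  assumes "coeff p 0 \<in> m" "2 \<le> j"
  shows "coeff (p ^ j) 0 = 0"
proof -
  obtain l where "j = Suc (Suc l)" using assms(2) by (metis add_2_eq_Suc le_Suc_ex)
  then have "coeff (p ^ j) 0 = (coeff p 0 * coeff p 0) * coeff p 0 ^ l"
    unfolding coeff_0_power by (simp add: mult.assoc)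
  then show ?thesis using square_zero[OF assms(1) assms(1)] by simp
qed

lemma irreducible_GE_power_add_const:
  assumes q: "GE_poly m q" and j: "2 \<le> j" and b: "b \<in> m" "b \<noteq> 0"
  shows "irreducible (q ^ j + [:b:])"
proof (rule irreducible_if_reduced_monomial)
  show "degree q * j > 0"
    using q j unfolding GE_poly_def by simp
  then show "reduced_monomial (q ^ j + [:b:]) (degree q * j)"
    using reduced_monomial_add_const reduced_monomial_power reduced_monomial_if_GE_poly q b by blast
  have "coeff q 0 \<in> m"
    using q unfolding GE_poly_def by blast
  then show "coeff (q ^ j + [:b:]) 0 \<noteq> 0"
    using coeff_0_power_eq_0 j b by simp
qed

lemma in_lengths_GE_power:
  assumes q: "GE_poly m q" "irreducible q" and m: "m \<noteq> {0}"
    and k: "2 \<le> k" "k \<le> n" "even (n - k)"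
  shows "k \<in> lengths (q ^ n)"
proof (cases "k = n")
  case True
  then show ?thesis
    using length_in_lengths[of "replicate n q"] q k by (simp add: prod_list_replicate)
next
  case False
  obtain a where a: "a \<in> m" "a \<noteq> 0" using m zero_in by blast
  define j where "j = (n - k) div 2 + 1"
  have j: "2 \<le> j" "2 * j + (k - 2) = n"
    using False k unfolding j_def by presburger+
  define xs where "xs = [q ^ j + [:a:], q ^ j + [:- a:]] @ replicate (k - 2) q"
  have "prod_list xs = (q ^ j)\<^sup>2 * q ^ (k - 2)"
    using square_zero[OF a(1) a(1)]
    by (simp add: xs_def prod_list_replicate mult.assoc[symmetric] square_zero_const_factorization)
  also have "\<dots> = q ^ (2 * j + (k - 2))"
    by (simp only: power_add mult.commute[of 2 j] power_mult)
  also have "\<dots> = q ^ n"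
    using j by simp
  finally have "prod_list xs = q ^ n" .
  moreover have "\<forall>x\<in>set xs. irreducible x"
    using irreducible_GE_power_add_const[OF q(1) j(1)] a uminus_in q(2)
    by (auto simp: xs_def)
  moreover have "xs \<noteq> []" "length xs = k"
    using k by (simp_all add: xs_def)
  ultimately show ?thesis
    using length_in_lengths[of xs] by metis
qed

end

theorem lemma4p5:
  fixes m :: "'a::comm_ring_1 set" and q :: "'a poly" and n :: nat
  assumes "artinian TYPE('a)"
    and "local_ring_with m"
    and "m \<noteq> {0}"
    and "\<forall>a\<in>m. \<forall>b\<in>m. a * b = 0"
    and "GE_poly m q"
    and "irreducible q"
    and "n \<ge> 2"
  shows "(even n \<longrightarrow> {k. even k \<and> 2 \<le> k \<and> k \<le> n} \<subseteq> lengths (q ^ n)) \<and>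
         (odd n \<longrightarrow> {k. odd k \<and> 3 \<le> k \<and> k \<le> n} \<subseteq> lengths (q ^ n))"
proof -
  interpret square_zero_maximal_ideal m
    using assms(2,4) by unfold_locales (auto simp: local_ring_with_def)
  have "k \<in> lengths (q ^ n)" if "2 \<le> k" "k \<le> n" "even (n - k)" for k
    using in_lengths_GE_power assms(3,5,6) that by blast
  then show ?thesis by (auto simp: even_diff_nat)
qed

end
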